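(* Let $X$ be a well-filtered space whose Smyth power space $P_S(X)$ is first-countable. The following are equivalent: (1) $X$ is locally compact. (2) $\mathsf{K}(X)$ is a continuous semilattice, and $\xi_X^\sigma:X\to\Sigma\,\mathsf{K}(X)$, $x\mapsto\uparrow x$, is continuous. (3) $\mathsf{K}(X)$ is a continuous semilattice, and $X$ has property Q. (4) $\mathsf{K}(X)$ is a continuous semilattice. (5) $X$ is core compact.
   Context: Spaces are $T_0$; specialization order $x\le y$ iff $x\in\overline{\{y\}}$; saturated = upper set. $\mathsf{K}(X)$ = nonempty compact saturated subsets ordered by reverse inclusion (a family has a supremum iff its intersection lies in $\mathsf{K}(X)$, and then it is the intersection). Scott topology on a poset: upper sets $U$ such that every directed $D$ with existing supremum in $U$ meets $U$; $\Sigma Q$ is $Q$ with it. $a\ll b$ means for every directed $D$ with existing $\bigvee D\ge b$ some $d\in D$ has $d\ge a$; $\mathsf{K}(X)$ is a continuous semilattice if it is directed complete and each $K$ is the directed supremum of $\{L:L\ll K\}$. $P_S(X)$: $\mathsf{K}(X)$ with base $\Box U=\{K:K\subseteq U\}$, $U$ open (upper Vietoris topology). Well-filtered: for open $U$ and $\mathcal K\subseteq\mathsf{K}(X)$ filtered under inclusion, $\bigcap\mathcal K\subseteq U$ implies some $K\in\mathcal K$ lies in $U$. Property Q: $K_1\ll K_2$ iff $K_2\subseteq\operatorname{int}K_1$. Locally compact: neighborhood bases of compact sets. Core compact: open-set lattice is continuous. *)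

theory Defs
  imports "HOL-Analysis.Analysis"
begin

definition spec_le :: "'a topology \<Rightarrow> 'a \<Rightarrow> 'a \<Rightarrow> bool" where
  "spec_le X x y \<longleftrightarrow> x \<in> X closure_of {y}"

definition saturated :: "'a topology \<Rightarrow> 'a set \<Rightarrow> bool" where
  "saturated X A \<longleftrightarrow> A \<subseteq> topspace X \<and>
     (\<forall>x\<in>A. \<forall>y\<in>topspace X. spec_le X x y \<longrightarrow> y \<in> A)"

definition upclosure :: "'a topology \<Rightarrow> 'a \<Rightarrow> 'a set" where
  "upclosure X x = {y \<in> topspace X. spec_le X x y}"

text \<open>K(X): nonempty compact saturated subsets; ordered by REVERSE inclusion.\<close>
definition KX :: "'a topology \<Rightarrow> 'a set set" where
  "KX X = {K. K \<noteq> {} \<and> compactin X K \<and> saturated X K}"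

text \<open>Directed subsets of K(X) w.r.t. reverse inclusion; filtered families under inclusion
  are the same thing.\<close>
definition K_directed :: "'a topology \<Rightarrow> 'a set set \<Rightarrow> bool" where
  "K_directed X D \<longleftrightarrow> D \<subseteq> KX X \<and> D \<noteq> {} \<and>
     (\<forall>K1\<in>D. \<forall>K2\<in>D. \<exists>K3\<in>D. K3 \<subseteq> K1 \<and> K3 \<subseteq> K2)"

definition well_filtered :: "'a topology \<Rightarrow> bool" where
  "well_filtered X \<longleftrightarrow>
     (\<forall>U \<K>. openin X U \<and> K_directed X \<K> \<and> \<Inter>\<K> \<subseteq> U \<longrightarrow> (\<exists>K\<in>\<K>. K \<subseteq> U))"

text \<open>Way-below in K(X): a family has a supremum iff its intersection lies in K(X),
  and then it is the intersection; \<open>\<Squnion>D \<ge> K2\<close> means \<open>\<Inter>D \<subseteq> K2\<close>.\<close>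
definition K_way_below :: "'a topology \<Rightarrow> 'a set \<Rightarrow> 'a set \<Rightarrow> bool" where
  "K_way_below X K1 K2 \<longleftrightarrow> K1 \<in> KX X \<and> K2 \<in> KX X \<and>
     (\<forall>D. K_directed X D \<and> \<Inter>D \<in> KX X \<and> \<Inter>D \<subseteq> K2 \<longrightarrow> (\<exists>d\<in>D. d \<subseteq> K1))"

definition K_directed_complete :: "'a topology \<Rightarrow> bool" where
  "K_directed_complete X \<longleftrightarrow> (\<forall>D. K_directed X D \<longrightarrow> \<Inter>D \<in> KX X)"

definition K_continuous_semilattice :: "'a topology \<Rightarrow> bool" where
  "K_continuous_semilattice X \<longleftrightarrow> K_directed_complete X \<and>
     (\<forall>K\<in>KX X. K_directed X {L. K_way_below X L K} \<and> \<Inter>{L. K_way_below X L K} = K)"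

definition K_scott_open :: "'a topology \<Rightarrow> 'a set set \<Rightarrow> bool" where
  "K_scott_open X \<U> \<longleftrightarrow> \<U> \<subseteq> KX X \<and>
     (\<forall>K\<in>\<U>. \<forall>L\<in>KX X. L \<subseteq> K \<longrightarrow> L \<in> \<U>) \<and>
     (\<forall>D. K_directed X D \<and> \<Inter>D \<in> KX X \<and> \<Inter>D \<in> \<U> \<longrightarrow> D \<inter> \<U> \<noteq> {})"

text \<open>The Scott opens already form a topology on K(X), so the generated topology
  has exactly them as open sets.\<close>
definition Sigma_K :: "'a topology \<Rightarrow> 'a set topology" where
  "Sigma_K X = topology_generated_by {\<U>. K_scott_open X \<U>}"

definition Box :: "'a topology \<Rightarrow> 'a set \<Rightarrow> 'a set set" where
  "Box X U = {K \<in> KX X. K \<subseteq> U}"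

definition smyth_power :: "'a topology \<Rightarrow> 'a set topology" where
  "smyth_power X = topology_generated_by {Box X U | U. openin X U}"

definition property_Q :: "'a topology \<Rightarrow> bool" where
  "property_Q X \<longleftrightarrow> (\<forall>K1\<in>KX X. \<forall>K2\<in>KX X.
      K_way_below X K1 K2 \<longleftrightarrow> K2 \<subseteq> X interior_of K1)"

definition locally_compact_nb :: "'a topology \<Rightarrow> bool" where
  "locally_compact_nb X \<longleftrightarrow> (\<forall>x\<in>topspace X. \<forall>U. openin X U \<and> x \<in> U \<longrightarrow>
      (\<exists>K. compactin X K \<and> x \<in> X interior_of K \<and> K \<subseteq> U))"

definition open_directed :: "'a topology \<Rightarrow> 'a set set \<Rightarrow> bool" where
  "open_directed X D \<longleftrightarrow> D \<noteq> {} \<and> (\<forall>V\<in>D. openin X V) \<and>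
     (\<forall>V1\<in>D. \<forall>V2\<in>D. \<exists>V3\<in>D. V1 \<subseteq> V3 \<and> V2 \<subseteq> V3)"

definition open_way_below :: "'a topology \<Rightarrow> 'a set \<Rightarrow> 'a set \<Rightarrow> bool" where
  "open_way_below X U V \<longleftrightarrow> openin X U \<and> openin X V \<and>
     (\<forall>D. open_directed X D \<and> V \<subseteq> \<Union>D \<longrightarrow> (\<exists>W\<in>D. U \<subseteq> W))"

definition core_compact :: "'a topology \<Rightarrow> bool" where
  "core_compact X \<longleftrightarrow> (\<forall>V. openin X V \<longrightarrow>
     open_directed X {U. open_way_below X U V} \<and> \<Union>{U. open_way_below X U V} = V)"

end

(* Property Q comes from first countability of the Smyth power space: if K1 \<lless> K2 but K2 is not
   inside the interior of K1, a sequence outside K1 converging to K2 yields a filtered family in K(X)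
   refuting K1 \<lless> K2.  Given property Q, continuity of K(X) and local compactness say the same thing.
   A core compact space has interpolating way-below chains of open sets, and a Hofmann-Mislove type
   argument (well-filteredness plus first countability) shows that their intersections are compact
   neighbourhoods, so the space is locally compact. *)

theory Submission
  imports Defs
begin

section \<open>Specialization order and saturation\<close>

lemma spec_le_iff:
  "spec_le X x y \<longleftrightarrow> x \<in> topspace X \<and> (\<forall>U. openin X U \<and> x \<in> U \<longrightarrow> y \<in> U)"
  unfolding spec_le_def in_closure_of by auto

lemma spec_le_refl: "x \<in> topspace X \<Longrightarrow> spec_le X x x"
  by (auto simp: spec_le_iff)

lemma spec_le_trans: "spec_le X x y \<Longrightarrow> spec_le X y z \<Longrightarrow> spec_le X x z"
  by (auto simp: spec_le_iff)

lemma openin_spec_le_mem: "openin X U \<Longrightarrow> x \<in> U \<Longrightarrow> spec_le X x y \<Longrightarrow> y \<in> U"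
  by (auto simp: spec_le_iff)

lemma openin_imp_saturated: "openin X U \<Longrightarrow> saturated X U"
  unfolding saturated_def using openin_subset[of X U] openin_spec_le_mem[of X U] by blast

lemma saturated_open_separation:
  assumes "saturated X K" "y \<in> topspace X" "y \<notin> K"
  obtains U where "openin X U" "K \<subseteq> U" "y \<notin> U"
proof
  show "openin X (topspace X - X closure_of {y})"
    by (simp add: openin_diff closedin_closure_of)
  show "K \<subseteq> topspace X - X closure_of {y}"
    using assms by (auto simp: saturated_def spec_le_def)
  show "y \<notin> topspace X - X closure_of {y}"
    using assms(2) closure_of_subset[of "{y}" X] by auto
qed

definition saturation :: "'a topology \<Rightarrow> 'a set \<Rightarrow> 'a set" where
  "saturation X A = {y \<in> topspace X. \<exists>x\<in>A. spec_le X x y}"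

lemma saturated_saturation: "saturated X (saturation X A)"
  by (auto simp: saturated_def saturation_def intro: spec_le_trans)

lemma subset_saturation: "A \<subseteq> topspace X \<Longrightarrow> A \<subseteq> saturation X A"
  by (auto simp: saturation_def intro: spec_le_refl)

lemma saturation_least: "saturated X S \<Longrightarrow> A \<subseteq> S \<Longrightarrow> saturation X A \<subseteq> S"
  by (auto simp: saturated_def saturation_def)

lemma saturation_mono: "A \<subseteq> B \<Longrightarrow> saturation X A \<subseteq> saturation X B"
  by (auto simp: saturation_def)

lemma compactin_saturation:
  assumes "compactin X A"
  shows "compactin X (saturation X A)"
  unfolding compactin_def
proof (intro conjI allI impI)
  show "saturation X A \<subseteq> topspace X"
    by (auto simp: saturation_def)
  fix \<U> assume \<U>: "(\<forall>U\<in>\<U>. openin X U) \<and> saturation X A \<subseteq> \<Union>\<U>"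
  then have \<U>_open: "\<And>U. U \<in> \<U> \<Longrightarrow> openin X U"
    by blast
  have "A \<subseteq> saturation X A"
    using assms by (simp add: compactin_subset_topspace subset_saturation)
  with \<U> have "A \<subseteq> \<Union>\<U>"
    by blast
  then obtain \<F> where \<F>: "finite \<F>" "\<F> \<subseteq> \<U>" "A \<subseteq> \<Union>\<F>"
    using compactinD[of X A \<U>] assms \<U>_open by blast
  have "saturation X A \<subseteq> \<Union>\<F>"
    using \<F> \<U>_open by (intro saturation_least openin_imp_saturated) auto
  with \<F> show "\<exists>\<F>. finite \<F> \<and> \<F> \<subseteq> \<U> \<and> saturation X A \<subseteq> \<Union>\<F>"
    by blast
qed

lemma upclosure_eq_saturation: "upclosure X x = saturation X {x}"
  by (auto simp: upclosure_def saturation_def)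

lemma mem_upclosure_self: "x \<in> topspace X \<Longrightarrow> x \<in> upclosure X x"
  by (simp add: upclosure_def spec_le_refl)

lemma upclosure_subset_openin: "openin X U \<Longrightarrow> x \<in> U \<Longrightarrow> upclosure X x \<subseteq> U"
  unfolding upclosure_def using openin_spec_le_mem[of X U x] by blast

lemma upclosure_in_KX: "x \<in> topspace X \<Longrightarrow> upclosure X x \<in> KX X"
  unfolding KX_def upclosure_eq_saturation
  using compactin_saturation[of X "{x}"] saturated_saturation[of X "{x}"]
    subset_saturation[of "{x}" X] by auto

lemma KX_subset_topspace: "K \<in> KX X \<Longrightarrow> K \<subseteq> topspace X"
  by (simp add: KX_def compactin_subset_topspace)

lemma compactin_Un_tail:
  assumes K: "compactin X K" and z: "range z \<subseteq> topspace X"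
    and conv: "\<And>G. openin X G \<Longrightarrow> K \<subseteq> G \<Longrightarrow> eventually (\<lambda>m. z m \<in> G) sequentially"
  shows "compactin X (K \<union> z ` {n..})"
  unfolding compactin_def
proof (intro conjI allI impI)
  show "K \<union> z ` {n..} \<subseteq> topspace X"
    using compactin_subset_topspace[OF K] z by blast
  fix \<U> assume \<U>: "(\<forall>U\<in>\<U>. openin X U) \<and> K \<union> z ` {n..} \<subseteq> \<Union>\<U>"
  then have \<U>_open: "\<And>U. U \<in> \<U> \<Longrightarrow> openin X U"
    by blast
  have "K \<subseteq> \<Union>\<U>"
    using \<U> by blast
  then obtain \<F>1 where \<F>1: "finite \<F>1" "\<F>1 \<subseteq> \<U>" "K \<subseteq> \<Union>\<F>1"
    using compactinD[of X K \<U>] K \<U>_open by blast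
  then have "openin X (\<Union>\<F>1)"
    using \<U>_open by blast
  then obtain k where k: "\<And>m. m \<ge> k \<Longrightarrow> z m \<in> \<Union>\<F>1"
    using conv[OF _ \<F>1(3)] unfolding eventually_sequentially by blast
  have "compactin X (z ` {n..<k})"
    using z by (intro finite_imp_compactin) auto
  moreover have "z ` {n..<k} \<subseteq> \<Union>\<U>"
    using \<U> by fastforce
  ultimately obtain \<F>2 where \<F>2: "finite \<F>2" "\<F>2 \<subseteq> \<U>" "z ` {n..<k} \<subseteq> \<Union>\<F>2"
    using compactinD[of X "z ` {n..<k}" \<U>] \<U>_open by blast
  have "z m \<in> \<Union>(\<F>1 \<union> \<F>2)" if "n \<le> m" for m
  proof (cases "m < k")
    case True
    with that have "z m \<in> z ` {n..<k}"
      by simp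
    with \<F>2(3) show ?thesis
      by blast
  next
    case False
    with k show ?thesis
      by auto
  qed
  with \<F>1(3) have "K \<union> z ` {n..} \<subseteq> \<Union>(\<F>1 \<union> \<F>2)"
    by blast
  moreover have "finite (\<F>1 \<union> \<F>2)" "\<F>1 \<union> \<F>2 \<subseteq> \<U>"
    using \<F>1 \<F>2 by auto
  ultimately show "\<exists>\<F>. finite \<F> \<and> \<F> \<subseteq> \<U> \<and> K \<union> z ` {n..} \<subseteq> \<Union>\<F>"
    by blast
qed

lemma saturation_Un_tail_in_KX:
  assumes K: "compactin X K" and z: "range z \<subseteq> topspace X"
    and conv: "\<And>G. openin X G \<Longrightarrow> K \<subseteq> G \<Longrightarrow> eventually (\<lambda>m. z m \<in> G) sequentially"
  shows "saturation X (K \<union> z ` {n..}) \<in> KX X"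
proof -
  have compact: "compactin X (K \<union> z ` {n..})"
    using K z conv by (rule compactin_Un_tail)
  moreover have "z n \<in> saturation X (K \<union> z ` {n..})"
    using subset_saturation[OF compactin_subset_topspace[OF compact]] by blast
  ultimately show ?thesis
    unfolding KX_def using compactin_saturation saturated_saturation by blast
qed

lemma Inter_saturation_tails:
  assumes K: "saturated X K"
    and conv: "\<And>G. openin X G \<Longrightarrow> K \<subseteq> G \<Longrightarrow> eventually (\<lambda>m. z m \<in> G) sequentially"
  shows "(\<Inter>n. saturation X (K \<union> z ` {n..})) = K"
proof
  have "K \<subseteq> saturation X K"
    using K by (simp add: saturated_def subset_saturation)
  then show "K \<subseteq> (\<Inter>n. saturation X (K \<union> z ` {n..}))"
    using saturation_mono[of K "K \<union> _" X] by blast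
  show "(\<Inter>n. saturation X (K \<union> z ` {n..})) \<subseteq> K"
  proof
    fix y assume y: "y \<in> (\<Inter>n. saturation X (K \<union> z ` {n..}))"
    show "y \<in> K"
    proof (rule ccontr)
      assume "y \<notin> K"
      moreover have "y \<in> topspace X"
        using y by (auto simp: saturation_def)
      ultimately obtain G where G: "openin X G" "K \<subseteq> G" "y \<notin> G"
        using K saturated_open_separation by metis
      then obtain k where "\<And>m. m \<ge> k \<Longrightarrow> z m \<in> G"
        using conv by (meson eventually_sequentially)
      then have "saturation X (K \<union> z ` {k..}) \<subseteq> G"
        using G by (intro saturation_least openin_imp_saturated) auto
      then show False
        using y G(3) by blast
    qed
  qed
qed

lemma K_directed_decseq:
  assumes "\<And>n. D n \<in> KX X" "decseq D"
  shows "K_directed X (range D)"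
  unfolding K_directed_def
proof (intro conjI ballI)
  fix A B assume "A \<in> range D" "B \<in> range D"
  then obtain a b where "A = D a" "B = D b"
    by blast
  with \<open>decseq D\<close> show "\<exists>C\<in>range D. C \<subseteq> A \<and> C \<subseteq> B"
    by (intro bexI[of _ "D (max a b)"]) (auto simp: decseq_def)
qed (use assms in auto)

section \<open>Countable neighbourhood bases from the Smyth power space\<close>

lemma countable_base_imp_decseq_base:
  assumes "countable \<W>" "\<W> \<noteq> {}"
    and opn: "\<And>W. W \<in> \<W> \<Longrightarrow> openin X W \<and> K \<subseteq> W"
    and base: "\<And>U. openin X U \<Longrightarrow> K \<subseteq> U \<Longrightarrow> \<exists>W\<in>\<W>. W \<subseteq> U"
  obtains W where "\<And>n. openin X (W n)" "\<And>n. K \<subseteq> W n" "decseq W"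
    "\<And>U. openin X U \<Longrightarrow> K \<subseteq> U \<Longrightarrow> \<exists>n. W n \<subseteq> U"
proof
  define e where "e = from_nat_into \<W>"
  have e: "e n \<in> \<W>" for n
    using assms(2) by (simp add: e_def from_nat_into)
  show "openin X (\<Inter>(e ` {..n}))" for n
    using e opn by (intro openin_Inter) auto
  show "K \<subseteq> \<Inter>(e ` {..n})" for n
    using e opn by blast
  show "decseq (\<lambda>n. \<Inter>(e ` {..n}))"
    by (auto simp: decseq_def)
  fix U assume "openin X U" "K \<subseteq> U"
  then obtain W where "W \<in> \<W>" "W \<subseteq> U"
    using base by blast
  moreover obtain n where "e n = W"
    using \<open>W \<in> \<W>\<close> assms(1) by (metis e_def from_nat_into_surj)
  ultimately show "\<exists>n. \<Inter>(e ` {..n}) \<subseteq> U"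
    by blast
qed

lemma first_countable_decseq_base:
  assumes "first_countable X" "x \<in> topspace X"
  obtains W where "\<And>n. openin X (W n)" "\<And>n. x \<in> W n" "decseq W"
    "\<And>U. openin X U \<Longrightarrow> x \<in> U \<Longrightarrow> \<exists>n. W n \<subseteq> U"
proof -
  obtain \<B> where \<B>: "countable \<B>" "\<And>V. V \<in> \<B> \<Longrightarrow> openin X V"
    "\<And>U. openin X U \<Longrightarrow> x \<in> U \<Longrightarrow> \<exists>V\<in>\<B>. x \<in> V \<and> V \<subseteq> U"
    using assms unfolding first_countable_def by meson
  have ne: "{V\<in>\<B>. x \<in> V} \<noteq> {}"
    using \<B>(3)[OF openin_topspace assms(2)] by blast
  show ?thesis
  proof (rule countable_base_imp_decseq_base[of "{V\<in>\<B>. x \<in> V}" X "{x}"])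
    fix W assume W: "\<And>n. openin X (W n)" "\<And>n. {x} \<subseteq> W n" "decseq W"
      "\<And>U. openin X U \<Longrightarrow> {x} \<subseteq> U \<Longrightarrow> \<exists>n. W n \<subseteq> U"
    show ?thesis
      by (rule that[of W]) (use W in auto)
  qed (use \<B> ne in \<open>auto dest!: \<B>(3)\<close>)
qed

lemma first_countable_decseq_bases:
  assumes "first_countable X"
  obtains N where "\<And>y k. y \<in> topspace X \<Longrightarrow> openin X (N y k) \<and> y \<in> N y k"
    "\<And>y. y \<in> topspace X \<Longrightarrow> decseq (N y)"
    "\<And>y G. y \<in> topspace X \<Longrightarrow> openin X G \<Longrightarrow> y \<in> G \<Longrightarrow> \<exists>k. N y k \<subseteq> G"
proof -
  have "\<forall>y\<in>topspace X. \<exists>N. (\<forall>k. openin X (N k) \<and> y \<in> N k) \<and> decseq N \<and>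
      (\<forall>G. openin X G \<and> y \<in> G \<longrightarrow> (\<exists>k. N k \<subseteq> G))"
  proof
    fix y assume "y \<in> topspace X"
    then obtain N where "\<And>k. openin X (N k)" "\<And>k. y \<in> N k" "decseq N"
      "\<And>G. openin X G \<Longrightarrow> y \<in> G \<Longrightarrow> \<exists>k. N k \<subseteq> G"
      using first_countable_decseq_base[OF assms] by metis
    then show "\<exists>N. (\<forall>k. openin X (N k) \<and> y \<in> N k) \<and> decseq N \<and>
        (\<forall>G. openin X G \<and> y \<in> G \<longrightarrow> (\<exists>k. N k \<subseteq> G))"
      by blast
  qed
  then show ?thesis
    using that by metis
qed

lemma openin_smyth_power_Box: "openin X U \<Longrightarrow> openin (smyth_power X) (Box X U)"
  unfolding smyth_power_def by (rule topology_generated_by_Basis) blast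

lemma topspace_smyth_power: "topspace (smyth_power X) = KX X"
proof -
  have "\<Union>{Box X U |U. openin X U} = KX X"
  proof
    show "\<Union>{Box X U |U. openin X U} \<subseteq> KX X"
      by (auto simp: Box_def)
    show "KX X \<subseteq> \<Union>{Box X U |U. openin X U}"
    proof
      fix K assume "K \<in> KX X"
      then have "K \<in> Box X (topspace X)"
        by (simp add: Box_def KX_subset_topspace)
      then show "K \<in> \<Union>{Box X U |U. openin X U}"
        by blast
    qed
  qed
  then show ?thesis
    by (simp add: smyth_power_def)
qed

lemma Box_Int: "Box X (A \<inter> B) = Box X A \<inter> Box X B"
  by (auto simp: Box_def)

lemma openin_smyth_power_imp_Box:
  assumes "openin (smyth_power X) \<V>" "K \<in> \<V>"
  shows "\<exists>U. openin X U \<and> K \<in> Box X U \<and> Box X U \<subseteq> \<V>"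
proof -
  have "generate_topology_on {Box X U |U. openin X U} \<V>"
    using assms(1) unfolding smyth_power_def by (rule openin_topology_generated_by)
  then have "\<forall>K\<in>\<V>. \<exists>U. openin X U \<and> K \<in> Box X U \<and> Box X U \<subseteq> \<V>"
  proof induction
    case (Int a b)
    show ?case
    proof
      fix K assume K: "K \<in> a \<inter> b"
      obtain U1 where "openin X U1" "K \<in> Box X U1" "Box X U1 \<subseteq> a"
        using Int.IH(1) K by blast
      moreover obtain U2 where "openin X U2" "K \<in> Box X U2" "Box X U2 \<subseteq> b"
        using Int.IH(2) K by blast
      ultimately show "\<exists>U. openin X U \<and> K \<in> Box X U \<and> Box X U \<subseteq> a \<inter> b"
        by (intro exI[of _ "U1 \<inter> U2"]) (auto simp: Box_Int)
    qed
  next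
    case (UN \<K>)
    show ?case
    proof
      fix K assume "K \<in> \<Union>\<K>"
      then obtain k where "k \<in> \<K>" "K \<in> k"
        by blast
      with UN.IH show "\<exists>U. openin X U \<and> K \<in> Box X U \<and> Box X U \<subseteq> \<Union>\<K>"
        by (meson Union_upper subset_trans)
    qed
  next
    case (Basis s)
    then obtain U where "s = Box X U" "openin X U"
      by blast
    then show ?case
      by blast
  qed simp
  with assms(2) show ?thesis
    by blast
qed

lemma Box_subset_Box_imp_subset:
  assumes "openin X W" "Box X W \<subseteq> Box X U"
  shows "W \<subseteq> U"
proof
  fix y assume y: "y \<in> W"
  then have yt: "y \<in> topspace X"
    using openin_subset[OF assms(1)] by blast
  have "upclosure X y \<in> Box X W"
    using upclosure_in_KX[OF yt] upclosure_subset_openin[OF assms(1) y] by (simp add: Box_def)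
  then have "upclosure X y \<subseteq> U"
    using assms(2) unfolding Box_def by blast
  then show "y \<in> U"
    using mem_upclosure_self[OF yt] by blast
qed

lemma smyth_first_countable_decseq_base:
  assumes "first_countable (smyth_power X)" "K \<in> KX X"
  obtains W where "\<And>n. openin X (W n)" "\<And>n. K \<subseteq> W n" "decseq W"
    "\<And>U. openin X U \<Longrightarrow> K \<subseteq> U \<Longrightarrow> \<exists>n. W n \<subseteq> U"
proof -
  have K: "K \<in> topspace (smyth_power X)"
    using assms(2) by (simp add: topspace_smyth_power)
  obtain \<V> where \<V>: "\<And>n. openin (smyth_power X) (\<V> n)" "\<And>n. K \<in> \<V> n" "decseq \<V>"
    "\<And>\<U>. openin (smyth_power X) \<U> \<Longrightarrow> K \<in> \<U> \<Longrightarrow> \<exists>n. \<V> n \<subseteq> \<U>"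
    using first_countable_decseq_base[OF assms(1) K] by metis
  have "\<forall>n. \<exists>U. openin X U \<and> K \<in> Box X U \<and> Box X U \<subseteq> \<V> n"
    using openin_smyth_power_imp_Box \<V>(1,2) by blast
  then obtain W' where W': "\<And>n. openin X (W' n) \<and> K \<in> Box X (W' n) \<and> Box X (W' n) \<subseteq> \<V> n"
    by metis
  have W'_base: "\<exists>n. W' n \<subseteq> U" if U: "openin X U" "K \<subseteq> U" for U
  proof -
    have "K \<in> Box X U"
      using assms(2) U(2) by (simp add: Box_def)
    then obtain n where "\<V> n \<subseteq> Box X U"
      using \<V>(4) openin_smyth_power_Box[OF U(1)] by blast
    then have "W' n \<subseteq> U"
      using W' Box_subset_Box_imp_subset by (meson subset_trans)
    then show ?thesis ..
  qed
  show ?thesis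
  proof (rule countable_base_imp_decseq_base[of "range W'" X K])
    fix W assume W: "\<And>n. openin X (W n)" "\<And>n. K \<subseteq> W n" "decseq W"
      "\<And>U. openin X U \<Longrightarrow> K \<subseteq> U \<Longrightarrow> \<exists>n. W n \<subseteq> U"
    show ?thesis
      by (rule that[of W]) (use W in auto)
  qed (use W' W'_base in \<open>auto simp: Box_def\<close>)
qed

lemma smyth_first_countable_imp_first_countable:
  assumes "first_countable (smyth_power X)"
  shows "first_countable X"
  unfolding first_countable_def
proof
  fix x assume x: "x \<in> topspace X"
  obtain W where W: "\<And>n. openin X (W n)" "\<And>n. upclosure X x \<subseteq> W n" "decseq W"
    "\<And>U. openin X U \<Longrightarrow> upclosure X x \<subseteq> U \<Longrightarrow> \<exists>n. W n \<subseteq> U"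
    using smyth_first_countable_decseq_base[OF assms upclosure_in_KX[OF x]] by metis
  have "x \<in> W n" for n
    using W(2)[of n] mem_upclosure_self[OF x] by blast
  then have "\<forall>U. openin X U \<and> x \<in> U \<longrightarrow> (\<exists>V\<in>range W. x \<in> V \<and> V \<subseteq> U)"
  proof (intro allI impI)
    fix U assume U: "openin X U \<and> x \<in> U"
    then have "upclosure X x \<subseteq> U"
      by (simp add: upclosure_subset_openin)
    then obtain n where "W n \<subseteq> U"
      using W(4)[of U] U by blast
    with \<open>x \<in> W n\<close> show "\<exists>V\<in>range W. x \<in> V \<and> V \<subseteq> U"
      by blast
  qed
  moreover have "\<forall>V\<in>range W. openin X V"
    using W(1) by blast
  ultimately show "\<exists>\<B>. countable \<B> \<and> (\<forall>V\<in>\<B>. openin X V) \<and>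
      (\<forall>U. openin X U \<and> x \<in> U \<longrightarrow> (\<exists>V\<in>\<B>. x \<in> V \<and> V \<subseteq> U))"
    by (intro exI[of _ "range W"]) simp
qed

section \<open>Way-below in K(X) and property Q\<close>

lemma well_filteredD:
  "well_filtered X \<Longrightarrow> openin X U \<Longrightarrow> K_directed X \<K> \<Longrightarrow> \<Inter>\<K> \<subseteq> U \<Longrightarrow> \<exists>K\<in>\<K>. K \<subseteq> U"
  unfolding well_filtered_def by blast

lemma K_way_belowD:
  "K_way_below X K1 K2 \<Longrightarrow> K_directed X D \<Longrightarrow> \<Inter>D \<in> KX X \<Longrightarrow> \<Inter>D \<subseteq> K2 \<Longrightarrow> \<exists>K\<in>D. K \<subseteq> K1"
  unfolding K_way_below_def by blast

lemma well_filtered_imp_Inter_in_KX: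
  assumes wf: "well_filtered X" and D: "K_directed X D"
  shows "\<Inter>D \<in> KX X"
proof -
  have DK: "D \<subseteq> KX X"
    using D by (simp add: K_directed_def)
  have ne: "\<Inter>D \<noteq> {}"
  proof
    assume "\<Inter>D = {}"
    then obtain K where "K \<in> D" "K \<subseteq> {}"
      using well_filteredD[OF wf openin_empty D] by blast
    with DK show False
      by (auto simp: KX_def)
  qed
  have D_top: "\<Inter>D \<subseteq> topspace X"
  proof -
    obtain K where "K \<in> D"
      using D by (auto simp: K_directed_def)
    with DK show ?thesis
      using KX_subset_topspace by blast
  qed
  have "compactin X (\<Inter>D)"
    unfolding compactin_def
  proof (intro conjI allI impI D_top)
    fix \<U> assume \<U>: "(\<forall>U\<in>\<U>. openin X U) \<and> \<Inter>D \<subseteq> \<Union>\<U>"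
    then have "openin X (\<Union>\<U>)"
      by blast
    then obtain K where K: "K \<in> D" "K \<subseteq> \<Union>\<U>"
      using well_filteredD[OF wf _ D] \<U> by metis
    then have "compactin X K"
      using DK by (auto simp: KX_def)
    then obtain \<F> where \<F>: "finite \<F>" "\<F> \<subseteq> \<U>" "K \<subseteq> \<Union>\<F>"
      using compactinD[of X K \<U>] K \<U> by blast
    have "\<Inter>D \<subseteq> \<Union>\<F>"
      using Inter_lower[OF K(1)] \<F>(3) by (rule subset_trans)
    with \<F>(1,2) show "\<exists>\<F>. finite \<F> \<and> \<F> \<subseteq> \<U> \<and> \<Inter>D \<subseteq> \<Union>\<F>"
      by blast
  qed
  moreover have "saturated X (\<Inter>D)"
    using DK D_top unfolding saturated_def KX_def by blast
  ultimately show ?thesis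
    using ne by (simp add: KX_def)
qed

lemma K_way_below_if_subset_interior:
  assumes "well_filtered X" "K1 \<in> KX X" "K2 \<in> KX X" "K2 \<subseteq> X interior_of K1"
  shows "K_way_below X K1 K2"
  unfolding K_way_below_def
proof (intro conjI allI impI assms(2,3))
  fix D assume D: "K_directed X D \<and> \<Inter>D \<in> KX X \<and> \<Inter>D \<subseteq> K2"
  with assms(4) have "\<Inter>D \<subseteq> X interior_of K1"
    by blast
  then obtain K where "K \<in> D" "K \<subseteq> X interior_of K1"
    using well_filteredD[OF assms(1) openin_interior_of] D by blast
  then show "\<exists>K\<in>D. K \<subseteq> K1"
    using interior_of_subset[of X K1] by blast
qed

text \<open>If K2 is not inside the interior of K1, points z n of a shrinking neighbourhood
  base of K2 outside K1 converge to K2; their saturated tails form a filtered family in K(X)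
  with intersection K2, none of which is contained in K1.\<close>
lemma subset_interior_if_K_way_below:
  assumes fc: "first_countable (smyth_power X)" and wb: "K_way_below X K1 K2"
  shows "K2 \<subseteq> X interior_of K1"
proof (rule ccontr)
  assume nsub: "\<not> K2 \<subseteq> X interior_of K1"
  have K2: "K2 \<in> KX X"
    using wb by (simp add: K_way_below_def)
  obtain W where W: "\<And>n. openin X (W n)" "\<And>n. K2 \<subseteq> W n" "decseq W"
    "\<And>U. openin X U \<Longrightarrow> K2 \<subseteq> U \<Longrightarrow> \<exists>n. W n \<subseteq> U"
    using smyth_first_countable_decseq_base[OF fc K2] by metis
  have "\<exists>z. z \<in> W n \<and> z \<notin> K1" for n
  proof (rule ccontr)
    assume "\<not> ?thesis"
    then have "W n \<subseteq> X interior_of K1"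
      using W(1) by (intro interior_of_maximal) auto
    with W(2) nsub show False
      by blast
  qed
  then obtain z where z: "\<And>n. z n \<in> W n" "\<And>n. z n \<notin> K1"
    by metis
  have z_top: "range z \<subseteq> topspace X"
    using z(1) W(1) openin_subset by blast
  have conv: "eventually (\<lambda>m. z m \<in> G) sequentially" if G: "openin X G" "K2 \<subseteq> G" for G
  proof -
    obtain k where "W k \<subseteq> G"
      using W(4)[OF G] by blast
    then have "z m \<in> G" if "m \<ge> k" for m
      using z(1)[of m] decseqD[OF W(3) that] by blast
    then show ?thesis
      unfolding eventually_sequentially by blast
  qed
  define D where "D n = saturation X (K2 \<union> z ` {n..})" for n
  have "D n \<in> KX X" for n
    unfolding D_def using K2 z_top conv by (intro saturation_Un_tail_in_KX) (simp_all add: KX_def)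
  moreover have "decseq D"
    unfolding D_def decseq_def by (auto intro!: saturation_mono)
  ultimately have "K_directed X (range D)"
    by (rule K_directed_decseq)
  moreover have "\<Inter>(range D) = K2"
    unfolding D_def using K2 conv by (intro Inter_saturation_tails) (simp_all add: KX_def)
  ultimately obtain n where "D n \<subseteq> K1"
    using K_way_belowD[OF wb, of "range D"] K2 by auto
  moreover have "z n \<in> D n"
    using z_top subset_saturation[of "K2 \<union> z ` {n..}" X] KX_subset_topspace[OF K2]
    unfolding D_def by blast
  ultimately show False
    using z(2) by blast
qed

lemma property_Q_if_well_filtered:
  assumes "well_filtered X" "first_countable (smyth_power X)"
  shows "property_Q X"
  unfolding property_Q_def
  using K_way_below_if_subset_interior[OF assms(1)] subset_interior_if_K_way_below[OF assms(2)]
  by blast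

section \<open>Local compactness and continuity of K(X)\<close>

lemma locally_compact_nbD:
  "locally_compact_nb X \<Longrightarrow> openin X U \<Longrightarrow> x \<in> U \<Longrightarrow>
    \<exists>C. compactin X C \<and> x \<in> X interior_of C \<and> C \<subseteq> U"
  unfolding locally_compact_nb_def using openin_subset by blast

lemma locally_compact_nb_imp_KX_nbhd:
  assumes lc: "locally_compact_nb X" and K: "compactin X K" "K \<noteq> {}"
    and U: "openin X U" "K \<subseteq> U"
  obtains L where "L \<in> KX X" "K \<subseteq> X interior_of L" "L \<subseteq> U"
proof -
  have "\<forall>x\<in>K. \<exists>C. compactin X C \<and> x \<in> X interior_of C \<and> C \<subseteq> U"
    using locally_compact_nbD[OF lc U(1)] U(2) by blast
  then obtain C where C: "\<And>x. x \<in> K \<Longrightarrow> compactin X (C x) \<and> x \<in> X interior_of C x \<and> C x \<subseteq> U"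
    by metis
  have "K \<subseteq> \<Union>((\<lambda>x. X interior_of C x) ` K)"
    using C by blast
  then have "\<exists>\<F>. finite \<F> \<and> \<F> \<subseteq> (\<lambda>x. X interior_of C x) ` K \<and> K \<subseteq> \<Union>\<F>"
    by (intro compactinD[OF K(1)]) auto
  then obtain \<F> where \<F>: "finite \<F>" "\<F> \<subseteq> (\<lambda>x. X interior_of C x) ` K" "K \<subseteq> \<Union>\<F>"
    by metis
  then obtain F where F: "F \<subseteq> K" "finite F" "K \<subseteq> (\<Union>x\<in>F. X interior_of C x)"
    by (metis finite_subset_image)
  define L where "L = saturation X (\<Union>(C ` F))"
  have C_compact: "compactin X (\<Union>(C ` F))"
    using F(1,2) C by (intro compactin_Union) auto
  have "C x \<subseteq> L" if "x \<in> F" for x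
  proof -
    have "\<Union>(C ` F) \<subseteq> L"
      unfolding L_def using subset_saturation[OF compactin_subset_topspace[OF C_compact]] .
    with that show ?thesis
      by blast
  qed
  then have "K \<subseteq> X interior_of L"
    using F(3) interior_of_mono by blast
  moreover have "L \<subseteq> U"
    unfolding L_def using U(1) C F(1) by (intro saturation_least openin_imp_saturated) auto
  moreover have "L \<in> KX X"
    using \<open>K \<subseteq> X interior_of L\<close> K(2) interior_of_subset[of X L] C_compact
    unfolding KX_def L_def by (auto intro: compactin_saturation saturated_saturation)
  ultimately show ?thesis
    using that by blast
qed

lemma K_way_below_iff:
  assumes "well_filtered X" "first_countable (smyth_power X)"
  shows "K_way_below X L K \<longleftrightarrow> L \<in> KX X \<and> K \<in> KX X \<and> K \<subseteq> X interior_of L"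
proof
  assume "K_way_below X L K"
  then show "L \<in> KX X \<and> K \<in> KX X \<and> K \<subseteq> X interior_of L"
    using subset_interior_if_K_way_below[OF assms(2)] by (simp add: K_way_below_def)
next
  assume "L \<in> KX X \<and> K \<in> KX X \<and> K \<subseteq> X interior_of L"
  then show "K_way_below X L K"
    using K_way_below_if_subset_interior[OF assms(1), of L K] by blast
qed

lemma K_way_below_approximation_imp_directed_Inter:
  assumes wf: "well_filtered X" and fc: "first_countable (smyth_power X)" and K: "K \<in> KX X"
    and approx: "\<And>U. openin X U \<Longrightarrow> K \<subseteq> U \<Longrightarrow> \<exists>L. K_way_below X L K \<and> L \<subseteq> U"
  shows "K_directed X {L. K_way_below X L K} \<and> \<Inter>{L. K_way_below X L K} = K"
proof
  let ?L = "{L. K_way_below X L K}"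
  obtain L0 where "L0 \<in> ?L"
    using approx[OF openin_topspace KX_subset_topspace[OF K]] by blast
  show "K_directed X ?L"
    unfolding K_directed_def
  proof (intro conjI ballI)
    show "?L \<subseteq> KX X"
      by (auto simp: K_way_below_def)
    show "?L \<noteq> {}"
      using \<open>L0 \<in> ?L\<close> by blast
    fix L1 L2 assume "L1 \<in> ?L" "L2 \<in> ?L"
    then have "K \<subseteq> X interior_of L1 \<inter> X interior_of L2"
      using K_way_below_iff[OF wf fc] by blast
    moreover have "openin X (X interior_of L1 \<inter> X interior_of L2)"
      by (simp add: openin_Int)
    ultimately obtain L3 where "L3 \<in> ?L" "L3 \<subseteq> X interior_of L1 \<inter> X interior_of L2"
      using approx by blast
    then show "\<exists>L3\<in>?L. L3 \<subseteq> L1 \<and> L3 \<subseteq> L2"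
      using interior_of_subset[of X L1] interior_of_subset[of X L2] by blast
  qed
  show "\<Inter>?L = K"
  proof
    have "K \<subseteq> L" if "L \<in> ?L" for L
      using that interior_of_subset[of X L] K_way_below_iff[OF wf fc] by blast
    then show "K \<subseteq> \<Inter>?L"
      by blast
    show "\<Inter>?L \<subseteq> K"
    proof
      fix y assume y: "y \<in> \<Inter>?L"
      with \<open>L0 \<in> ?L\<close> have "y \<in> topspace X"
        using KX_subset_topspace by (auto simp: K_way_below_def)
      show "y \<in> K"
      proof (rule ccontr)
        assume "y \<notin> K"
        then obtain G where G: "openin X G" "K \<subseteq> G" "y \<notin> G"
          using saturated_open_separation[of X K y] K \<open>y \<in> topspace X\<close> by (auto simp: KX_def)
        then obtain L where "L \<in> ?L" "L \<subseteq> G"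
          using approx by blast
        with y G(3) show False
          by blast
      qed
    qed
  qed
qed

lemma K_continuous_semilattice_if_locally_compact:
  assumes wf: "well_filtered X" and fc: "first_countable (smyth_power X)"
    and lc: "locally_compact_nb X"
  shows "K_continuous_semilattice X"
  unfolding K_continuous_semilattice_def K_directed_complete_def
proof (intro conjI ballI allI impI)
  show "\<Inter>D \<in> KX X" if "K_directed X D" for D
    using well_filtered_imp_Inter_in_KX[OF wf that] .
  fix K assume K: "K \<in> KX X"
  then have K_compact: "compactin X K" and K_ne: "K \<noteq> {}"
    by (auto simp: KX_def)
  have "\<exists>L. K_way_below X L K \<and> L \<subseteq> U" if U: "openin X U" "K \<subseteq> U" for U
  proof -
    obtain L where "L \<in> KX X" "K \<subseteq> X interior_of L" "L \<subseteq> U"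
      using locally_compact_nb_imp_KX_nbhd[OF lc K_compact K_ne U] by metis
    then show ?thesis
      using K K_way_below_iff[OF wf fc] by auto
  qed
  then show "K_directed X {L. K_way_below X L K}" "\<Inter>{L. K_way_below X L K} = K"
    using K_way_below_approximation_imp_directed_Inter[OF wf fc K] by blast+
qed

lemma K_continuous_semilatticeD:
  "K_continuous_semilattice X \<Longrightarrow> K \<in> KX X \<Longrightarrow>
    K_directed X {L. K_way_below X L K} \<and> \<Inter>{L. K_way_below X L K} = K"
  unfolding K_continuous_semilattice_def by blast

lemma locally_compact_if_K_continuous_semilattice:
  assumes wf: "well_filtered X" and fc: "first_countable (smyth_power X)"
    and kc: "K_continuous_semilattice X"
  shows "locally_compact_nb X"
  unfolding locally_compact_nb_def
proof (intro ballI allI impI)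
  fix x U assume x: "x \<in> topspace X" and U: "openin X U \<and> x \<in> U"
  then have "upclosure X x \<subseteq> U"
    using upclosure_subset_openin[of X U x] by blast
  moreover note K_continuous_semilatticeD[OF kc upclosure_in_KX[OF x]]
  ultimately obtain L where L: "K_way_below X L (upclosure X x)" "L \<subseteq> U"
    using well_filteredD[OF wf, of U "{L. K_way_below X L (upclosure X x)}"] U by auto
  then have "x \<in> X interior_of L"
    using subset_interior_if_K_way_below[OF fc] mem_upclosure_self[OF x] by blast
  moreover have "compactin X L"
    using L(1) by (simp add: K_way_below_def KX_def)
  ultimately show "\<exists>K. compactin X K \<and> x \<in> X interior_of K \<and> K \<subseteq> U"
    using L(2) by blast
qed

lemma K_scott_openD:
  assumes "K_scott_open X \<U>"
  shows "\<And>K L. K \<in> \<U> \<Longrightarrow> L \<in> KX X \<Longrightarrow> L \<subseteq> K \<Longrightarrow> L \<in> \<U>"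
    and "\<And>D. K_directed X D \<Longrightarrow> \<Inter>D \<in> \<U> \<Longrightarrow> \<Inter>D \<in> KX X \<Longrightarrow> D \<inter> \<U> \<noteq> {}"
  using assms unfolding K_scott_open_def by blast+

lemma K_scott_open_KX: "K_scott_open X (KX X)"
  unfolding K_scott_open_def K_directed_def by blast

text \<open>A Scott open set containing the point \<open>\<up>x\<close> contains some L way below it; by property Q,
  the interior of L is a neighbourhood of x all of whose points are mapped into the Scott open set.\<close>
lemma continuous_map_upclosure_Sigma_K:
  assumes fc: "first_countable (smyth_power X)" and kc: "K_continuous_semilattice X"
  shows "continuous_map X (Sigma_K X) (upclosure X)"
  unfolding Sigma_K_def
proof (rule continuous_on_generated_topo)
  fix \<U> assume "\<U> \<in> {\<U>. K_scott_open X \<U>}"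
  then have so: "K_scott_open X \<U>"
    by simp
  show "openin X (upclosure X -` \<U> \<inter> topspace X)"
  proof (subst openin_subopen, intro ballI)
    fix x assume x: "x \<in> upclosure X -` \<U> \<inter> topspace X"
    then have xt: "x \<in> topspace X" and "upclosure X x \<in> \<U>"
      by auto
    with K_continuous_semilatticeD[OF kc upclosure_in_KX[OF xt]]
    obtain L where L: "K_way_below X L (upclosure X x)" "L \<in> \<U>"
      using K_scott_openD(2)[OF so, of "{L. K_way_below X L (upclosure X x)}"]
        upclosure_in_KX[OF xt] by auto
    have "upclosure X y \<in> \<U>" if "y \<in> X interior_of L" for y
    proof -
      have yt: "y \<in> topspace X"
        using that interior_of_subset_topspace[of X L] by blast
      have "saturated X L"
        using L(1) by (simp add: K_way_below_def KX_def)
      then have "upclosure X y \<subseteq> L"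
        using that interior_of_subset[of X L] unfolding upclosure_def saturated_def by blast
      then show ?thesis
        using K_scott_openD(1)[OF so L(2) upclosure_in_KX[OF yt]] by blast
    qed
    moreover have "x \<in> X interior_of L"
      using subset_interior_if_K_way_below[OF fc L(1)] mem_upclosure_self[OF xt] by blast
    ultimately show "\<exists>T. openin X T \<and> x \<in> T \<and> T \<subseteq> upclosure X -` \<U> \<inter> topspace X"
      by (intro exI[of _ "X interior_of L"]) (auto simp: interior_of_subset_topspace[THEN subsetD])
  qed
next
  have "upclosure X ` topspace X \<subseteq> KX X"
    by (auto simp: upclosure_in_KX)
  then show "upclosure X ` topspace X \<subseteq> \<Union>{\<U>. K_scott_open X \<U>}"
    using K_scott_open_KX[of X] by blast
qed

section \<open>Core compactness\<close>

lemma open_directedD: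
  "open_directed X D \<Longrightarrow> V1 \<in> D \<Longrightarrow> V2 \<in> D \<Longrightarrow> \<exists>V3\<in>D. V1 \<subseteq> V3 \<and> V2 \<subseteq> V3"
  unfolding open_directed_def by blast

lemma open_directed_chain:
  assumes "\<C> \<noteq> {}" "\<And>G. G \<in> \<C> \<Longrightarrow> openin X G" "\<forall>A\<in>\<C>. \<forall>B\<in>\<C>. A \<subseteq> B \<or> B \<subseteq> A"
  shows "open_directed X \<C>"
  unfolding open_directed_def
proof (intro conjI ballI assms(1,2))
  fix V1 V2 assume "V1 \<in> \<C>" "V2 \<in> \<C>"
  with assms(3) have "V1 \<subseteq> V2 \<or> V2 \<subseteq> V1"
    by blast
  with \<open>V1 \<in> \<C>\<close> \<open>V2 \<in> \<C>\<close> show "\<exists>V3\<in>\<C>. V1 \<subseteq> V3 \<and> V2 \<subseteq> V3"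
    by blast
qed

lemma open_way_belowD:
  "open_way_below X U V \<Longrightarrow> open_directed X D \<Longrightarrow> V \<subseteq> \<Union>D \<Longrightarrow> \<exists>W\<in>D. U \<subseteq> W"
  unfolding open_way_below_def by blast

lemma open_way_below_subset:
  assumes "open_way_below X U V"
  shows "U \<subseteq> V"
proof -
  have "open_directed X {V}"
    using assms by (simp add: open_directed_def open_way_below_def)
  then show ?thesis
    using open_way_belowD[OF assms, of "{V}"] by blast
qed

lemma open_way_below_mono:
  assumes UV: "open_way_below X U V" and "openin X U'" "U' \<subseteq> U" "openin X V'" "V \<subseteq> V'"
  shows "open_way_below X U' V'"
  unfolding open_way_below_def
proof (intro conjI allI impI assms(2,4))
  fix D assume "open_directed X D \<and> V' \<subseteq> \<Union>D"
  then obtain W where "W \<in> D" "U \<subseteq> W"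
    using open_way_belowD[OF UV, of D] \<open>V \<subseteq> V'\<close> by blast
  with \<open>U' \<subseteq> U\<close> show "\<exists>W\<in>D. U' \<subseteq> W"
    by blast
qed

lemma open_way_below_Un:
  assumes U1: "open_way_below X U1 V" and U2: "open_way_below X U2 V"
  shows "open_way_below X (U1 \<union> U2) V"
  unfolding open_way_below_def
proof (intro conjI allI impI)
  show "openin X (U1 \<union> U2)" "openin X V"
    using U1 U2 by (auto simp: open_way_below_def)
  fix D assume D: "open_directed X D \<and> V \<subseteq> \<Union>D"
  obtain W1 W2 where W: "W1 \<in> D" "U1 \<subseteq> W1" "W2 \<in> D" "U2 \<subseteq> W2"
    using open_way_belowD[OF U1, of D] open_way_belowD[OF U2, of D] D by blast
  moreover obtain W3 where "W3 \<in> D" "W1 \<subseteq> W3" "W2 \<subseteq> W3"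
    using open_directedD[of X D W1 W2] D W(1,3) by blast
  ultimately show "\<exists>W\<in>D. U1 \<union> U2 \<subseteq> W"
    by blast
qed

lemma open_way_below_empty: "openin X V \<Longrightarrow> open_way_below X {} V"
  by (auto simp: open_way_below_def open_directed_def)

lemma open_directed_finite_Unions:
  assumes "\<And>C. C \<in> \<C> \<Longrightarrow> openin X C"
  shows "open_directed X {\<Union>\<F> | \<F>. finite \<F> \<and> \<F> \<subseteq> \<C>}"
  unfolding open_directed_def
proof (intro conjI ballI)
  show "{\<Union>\<F> | \<F>. finite \<F> \<and> \<F> \<subseteq> \<C>} \<noteq> {}"
    by blast
  show "openin X V" if "V \<in> {\<Union>\<F> | \<F>. finite \<F> \<and> \<F> \<subseteq> \<C>}" for V
    using that assms by blast
  fix V1 V2 assume "V1 \<in> {\<Union>\<F> | \<F>. finite \<F> \<and> \<F> \<subseteq> \<C>}" "V2 \<in> {\<Union>\<F> | \<F>. finite \<F> \<and> \<F> \<subseteq> \<C>}"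
  then obtain \<F>1 \<F>2 where "V1 = \<Union>\<F>1" "finite \<F>1" "\<F>1 \<subseteq> \<C>" "V2 = \<Union>\<F>2" "finite \<F>2" "\<F>2 \<subseteq> \<C>"
    by blast
  then have mem: "\<Union>(\<F>1 \<union> \<F>2) \<in> {\<Union>\<F> | \<F>. finite \<F> \<and> \<F> \<subseteq> \<C>}"
    by (intro CollectI exI[of _ "\<F>1 \<union> \<F>2"]) simp
  have "V1 \<subseteq> \<Union>(\<F>1 \<union> \<F>2) \<and> V2 \<subseteq> \<Union>(\<F>1 \<union> \<F>2)"
    using \<open>V1 = \<Union>\<F>1\<close> \<open>V2 = \<Union>\<F>2\<close> by auto
  with mem show "\<exists>V3\<in>{\<Union>\<F> | \<F>. finite \<F> \<and> \<F> \<subseteq> \<C>}. V1 \<subseteq> V3 \<and> V2 \<subseteq> V3"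
    by (rule bexI[rotated])
qed

lemma open_way_below_finite_subcover:
  assumes "open_way_below X U V" "\<And>C. C \<in> \<C> \<Longrightarrow> openin X C" "V \<subseteq> \<Union>\<C>"
  shows "\<exists>\<F>. finite \<F> \<and> \<F> \<subseteq> \<C> \<and> U \<subseteq> \<Union>\<F>"
proof -
  have cover: "V \<subseteq> \<Union>{\<Union>\<F> | \<F>. finite \<F> \<and> \<F> \<subseteq> \<C>}"
  proof
    fix y assume "y \<in> V"
    then obtain C where "C \<in> \<C>" "y \<in> C"
      using assms(3) by blast
    then have "\<Union>{C} \<in> {\<Union>\<F> | \<F>. finite \<F> \<and> \<F> \<subseteq> \<C>}"
      by blast
    with \<open>y \<in> C\<close> show "y \<in> \<Union>{\<Union>\<F> | \<F>. finite \<F> \<and> \<F> \<subseteq> \<C>}"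
      by blast
  qed
  have "open_directed X {\<Union>\<F> | \<F>. finite \<F> \<and> \<F> \<subseteq> \<C>}"
    by (rule open_directed_finite_Unions) (rule assms(2))
  then obtain W where "W \<in> {\<Union>\<F> | \<F>. finite \<F> \<and> \<F> \<subseteq> \<C>}" "U \<subseteq> W"
    using open_way_belowD[OF assms(1) _ cover] by blast
  then show ?thesis
    by blast
qed

lemma open_directed_finite_subset_bound:
  assumes D: "open_directed X D" and "finite \<F>" "\<F> \<subseteq> D"
  shows "\<exists>W\<in>D. \<Union>\<F> \<subseteq> W"
  using assms(2,3)
proof (induction \<F> rule: finite_induct)
  case empty
  then show ?case
    using D by (auto simp: open_directed_def)
next
  case (insert G \<F>)
  then have "G \<in> D" "\<F> \<subseteq> D"
    by auto
  obtain W where "W \<in> D" "\<Union>\<F> \<subseteq> W"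
    using insert.IH[OF \<open>\<F> \<subseteq> D\<close>] by metis
  moreover obtain W' where "W' \<in> D" "G \<subseteq> W'" "W \<subseteq> W'"
    using open_directedD[OF D \<open>G \<in> D\<close> \<open>W \<in> D\<close>] by blast
  ultimately show ?case
    by blast
qed

lemma open_way_below_if_compact:
  assumes K: "compactin X K" and U: "openin X U" "U \<subseteq> K" and V: "openin X V" "K \<subseteq> V"
  shows "open_way_below X U V"
  unfolding open_way_below_def
proof (intro conjI allI impI U(1) V(1))
  fix D assume D: "open_directed X D \<and> V \<subseteq> \<Union>D"
  then have D_open: "\<And>W. W \<in> D \<Longrightarrow> openin X W"
    by (simp add: open_directed_def)
  have "K \<subseteq> \<Union>D"
    using V(2) D by blast
  then obtain \<F> where \<F>: "finite \<F>" "\<F> \<subseteq> D" "K \<subseteq> \<Union>\<F>"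
    using compactinD[of X K D] K D_open by blast
  then obtain W where "W \<in> D" "\<Union>\<F> \<subseteq> W"
    using open_directed_finite_subset_bound[of X D \<F>] D by metis
  moreover have "U \<subseteq> \<Union>\<F>"
    using U(2) \<F>(3) by (rule subset_trans)
  ultimately show "\<exists>W\<in>D. U \<subseteq> W"
    by blast
qed

lemma core_compactD:
  "core_compact X \<Longrightarrow> openin X V \<Longrightarrow>
    open_directed X {U. open_way_below X U V} \<and> \<Union>{U. open_way_below X U V} = V"
  unfolding core_compact_def by blast

lemma core_compact_if_locally_compact:
  assumes lc: "locally_compact_nb X"
  shows "core_compact X"
  unfolding core_compact_def
proof (intro allI impI conjI)
  fix V assume V: "openin X V"
  show "open_directed X {U. open_way_below X U V}"
    unfolding open_directed_def
  proof (intro conjI ballI)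
    show "{U. open_way_below X U V} \<noteq> {}"
      using open_way_below_empty[OF V] by blast
    show "openin X U" if "U \<in> {U. open_way_below X U V}" for U
      using that by (simp add: open_way_below_def)
    fix U1 U2 assume "U1 \<in> {U. open_way_below X U V}" "U2 \<in> {U. open_way_below X U V}"
    then show "\<exists>U3\<in>{U. open_way_below X U V}. U1 \<subseteq> U3 \<and> U2 \<subseteq> U3"
      using open_way_below_Un by blast
  qed
  show "\<Union>{U. open_way_below X U V} = V"
  proof
    show "\<Union>{U. open_way_below X U V} \<subseteq> V"
      using open_way_below_subset by blast
    show "V \<subseteq> \<Union>{U. open_way_below X U V}"
    proof
      fix y assume "y \<in> V"
      then obtain C where C: "compactin X C" "y \<in> X interior_of C" "C \<subseteq> V"
        using locally_compact_nbD[OF lc V] by blast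
      then have "open_way_below X (X interior_of C) V"
        using V C(1,3) interior_of_subset[of X C] by (intro open_way_below_if_compact) auto
      with C(2) show "y \<in> \<Union>{U. open_way_below X U V}"
        by blast
    qed
  qed
qed

lemma open_directed_way_below_interpolants:
  assumes V: "openin X V"
  shows "open_directed X {C. \<exists>B. open_way_below X C B \<and> open_way_below X B V}"
    (is "open_directed X ?D")
  unfolding open_directed_def
proof (intro conjI ballI)
  show "?D \<noteq> {}"
    using open_way_below_empty[OF V] open_way_below_empty[OF openin_empty] by blast
  show "openin X C" if "C \<in> ?D" for C
    using that by (auto simp: open_way_below_def)
  fix C1 C2 assume "C1 \<in> ?D" "C2 \<in> ?D"
  then obtain B1 B2 where B: "open_way_below X C1 B1" "open_way_below X B1 V"
    "open_way_below X C2 B2" "open_way_below X B2 V"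
    by blast
  have "openin X (B1 \<union> B2)" "openin X C1" "openin X C2"
    using B by (auto simp: open_way_below_def)
  then have "open_way_below X C1 (B1 \<union> B2)" "open_way_below X C2 (B1 \<union> B2)"
    using open_way_below_mono[OF B(1)] open_way_below_mono[OF B(3)] by blast+
  then have "open_way_below X (C1 \<union> C2) (B1 \<union> B2)"
    by (rule open_way_below_Un)
  moreover have "open_way_below X (B1 \<union> B2) V"
    using B(2,4) by (rule open_way_below_Un)
  ultimately show "\<exists>C3\<in>?D. C1 \<subseteq> C3 \<and> C2 \<subseteq> C3"
    by blast
qed

text \<open>In a core compact space every point of V lies in some C \<lless> B \<lless> V; so the interpolants
  form a directed family covering V, and A \<lless> V puts A below one of them.\<close>
lemma open_way_below_interpolate:
  assumes cc: "core_compact X" and AV: "open_way_below X A V"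
  obtains B where "open_way_below X A B" "open_way_below X B V"
proof -
  have V: "openin X V"
    using AV by (simp add: open_way_below_def)
  have "V \<subseteq> \<Union>{C. \<exists>B. open_way_below X C B \<and> open_way_below X B V}"
  proof
    fix y assume "y \<in> V"
    then obtain B where B: "open_way_below X B V" "y \<in> B"
      using core_compactD[OF cc V] by blast
    have "openin X B"
      using B(1) by (simp add: open_way_below_def)
    then obtain C where "open_way_below X C B" "y \<in> C"
      using core_compactD[OF cc] B(2) by blast
    with B(1) show "y \<in> \<Union>{C. \<exists>B. open_way_below X C B \<and> open_way_below X B V}"
      by blast
  qed
  then obtain C B where "A \<subseteq> C" "open_way_below X C B" "open_way_below X B V"
    using open_way_belowD[OF AV open_directed_way_below_interpolants[OF V]] by blast
  moreover have "openin X A" "openin X B"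
    using AV \<open>open_way_below X B V\<close> by (simp_all add: open_way_below_def)
  ultimately have "open_way_below X A B"
    using open_way_below_mono[of X C B A B] by blast
  with \<open>open_way_below X B V\<close> show ?thesis
    using that by blast
qed

section \<open>Intersections of way-below chains of open sets\<close>

lemma exists_maximal_open_avoiding_chain:
  assumes Uw: "\<And>n. open_way_below X (U (Suc n)) (U n)"
    and V: "openin X V" "\<And>n. \<not> U n \<subseteq> V"
  obtains M where "openin X M" "V \<subseteq> M" "\<And>n. \<not> U n \<subseteq> M"
    "\<And>G. openin X G \<Longrightarrow> (\<And>n. \<not> U n \<subseteq> M \<union> G) \<Longrightarrow> G \<subseteq> M"
proof -
  define \<G> where "\<G> = {G. openin X G \<and> V \<subseteq> G \<and> (\<forall>n. \<not> U n \<subseteq> G)}"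
  have "\<exists>B\<in>\<G>. \<forall>G\<in>\<C>. G \<subseteq> B" if \<C>: "\<C> \<in> chains \<G>" for \<C>
  proof (cases "\<C> = {}")
    case True
    with V show ?thesis
      unfolding \<G>_def by blast
  next
    case False
    have \<C>\<G>: "\<C> \<subseteq> \<G>" and chain: "\<forall>A\<in>\<C>. \<forall>B\<in>\<C>. A \<subseteq> B \<or> B \<subseteq> A"
      using \<C> unfolding chains_def chain_subset_def by blast+
    then have "open_directed X \<C>"
      using False unfolding \<G>_def by (intro open_directed_chain) auto
    have "\<not> U n \<subseteq> \<Union>\<C>" for n
    proof
      assume "U n \<subseteq> \<Union>\<C>"
      then obtain G where "G \<in> \<C>" "U (Suc n) \<subseteq> G"
        using open_way_belowD[OF Uw \<open>open_directed X \<C>\<close>] by blast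
      with \<C>\<G> show False
        unfolding \<G>_def by blast
    qed
    moreover have "openin X (\<Union>\<C>)" "V \<subseteq> \<Union>\<C>"
      using \<C>\<G> False unfolding \<G>_def by blast+
    ultimately show ?thesis
      unfolding \<G>_def by blast
  qed
  then obtain M where M: "M \<in> \<G>" and max: "\<And>G. G \<in> \<G> \<Longrightarrow> M \<subseteq> G \<Longrightarrow> G = M"
    using Zorn_Lemma2[of \<G>] by metis
  show ?thesis
  proof (rule that)
    show "openin X M" "V \<subseteq> M" "\<And>n. \<not> U n \<subseteq> M"
      using M unfolding \<G>_def by blast+
    fix G assume "openin X G" "\<And>n. \<not> U n \<subseteq> M \<union> G"
    then have "M \<union> G \<in> \<G>"
      using M unfolding \<G>_def by blast
    with max show "G \<subseteq> M"
      by blast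
  qed
qed

text \<open>The complement of such an M behaves like an irreducible closed set relative to the chain.\<close>
lemma maximal_open_avoiding_chain_Inter:
  assumes "decseq U" "\<And>n. openin X (U n)" "\<And>n. \<not> U n \<subseteq> M"
    and max: "\<And>G. openin X G \<Longrightarrow> (\<And>n. \<not> U n \<subseteq> M \<union> G) \<Longrightarrow> G \<subseteq> M"
    and "finite \<F>" "\<And>G. G \<in> \<F> \<Longrightarrow> openin X G \<and> \<not> G \<subseteq> M"
  shows "openin X (U n \<inter> \<Inter>\<F>) \<and> \<not> U n \<inter> \<Inter>\<F> \<subseteq> M"
  using assms(5,6)
proof (induction \<F> rule: finite_induct)
  case empty
  then show ?case
    using assms(2,3) by simp
next
  case (insert G \<F>)
  then have G: "openin X G" "\<not> G \<subseteq> M" and IH: "openin X (U n \<inter> \<Inter>\<F>)" "\<not> U n \<inter> \<Inter>\<F> \<subseteq> M"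
    by auto
  obtain a where a: "U a \<subseteq> M \<union> G"
    using max[OF G(1)] G(2) by blast
  obtain b where b: "U b \<subseteq> M \<union> (U n \<inter> \<Inter>\<F>)"
    using max[OF IH(1)] IH(2) by blast
  have "U (max a b) \<subseteq> M \<union> (G \<inter> (U n \<inter> \<Inter>\<F>))"
    using a b decseqD[OF assms(1), of a "max a b"] decseqD[OF assms(1), of b "max a b"] by auto
  then have "\<not> G \<inter> (U n \<inter> \<Inter>\<F>) \<subseteq> M"
    using assms(3)[of "max a b"] by blast
  moreover have "U n \<inter> \<Inter>(insert G \<F>) = G \<inter> (U n \<inter> \<Inter>\<F>)"
    by blast
  ultimately show ?case
    using G(1) IH(1) by auto
qed

text \<open>Each new point is chosen inside the n-th basic neighbourhoods of all earlier points, so the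
  sequence converges to each of its terms.\<close>
lemma sequence_converging_to_each_term:
  assumes fc: "first_countable X" and S: "\<And>n. S n \<subseteq> topspace X"
    and meet: "\<And>n \<F>. finite \<F> \<Longrightarrow> (\<And>G. G \<in> \<F> \<Longrightarrow> openin X G \<and> \<not> G \<subseteq> M) \<Longrightarrow>
      \<not> S n \<inter> \<Inter>\<F> \<subseteq> M"
  obtains x where "\<And>n. x n \<in> S n - M"
    "\<And>n G. openin X G \<Longrightarrow> x n \<in> G \<Longrightarrow> eventually (\<lambda>m. x m \<in> G) sequentially"
proof -
  obtain N where N: "\<And>y k. y \<in> topspace X \<Longrightarrow> openin X (N y k) \<and> y \<in> N y k"
    "\<And>y. y \<in> topspace X \<Longrightarrow> decseq (N y)"
    "\<And>y G. y \<in> topspace X \<Longrightarrow> openin X G \<Longrightarrow> y \<in> G \<Longrightarrow> \<exists>k. N y k \<subseteq> G"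
    using first_countable_decseq_bases[OF fc] by metis
  let ?P = "\<lambda>x n p. p \<in> S n \<inter> (\<Inter>j<n. N (x j) n) - M"
  have "\<exists>x. \<forall>n::nat. ?P x n (x n)"
  proof (rule dependent_wellorder_choice)
    fix n and x :: "nat \<Rightarrow> 'a"
    assume prev: "\<And>j. j < n \<Longrightarrow> ?P x j (x j)"
    have "openin X (N (x j) n) \<and> \<not> N (x j) n \<subseteq> M" if "j < n" for j
    proof -
      have "x j \<in> topspace X" "x j \<notin> M"
        using prev[OF that] S by blast+
      then show ?thesis
        using N(1) by blast
    qed
    then have "\<not> S n \<inter> \<Inter>((\<lambda>j. N (x j) n) ` {..<n}) \<subseteq> M"
      by (intro meet) auto
    then show "\<exists>p. ?P x n p"
      by blast
  qed simp
  then obtain x where x: "\<And>n. ?P x n (x n)"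
    by blast
  show ?thesis
  proof (rule that)
    show "x n \<in> S n - M" for n
      using x by blast
    fix n G assume G: "openin X G" "x n \<in> G"
    have xt: "x n \<in> topspace X"
      using x S by blast
    obtain k where "N (x n) k \<subseteq> G"
      using N(3)[OF xt G] by blast
    moreover have "x m \<in> N (x n) k" if "m \<ge> max k (Suc n)" for m
      using x[of m] that decseqD[OF N(2)[OF xt], of k m] by auto
    ultimately show "eventually (\<lambda>m. x m \<in> G) sequentially"
      unfolding eventually_sequentially by blast
  qed
qed

lemma well_filtered_tail_saturations_subset_open:
  assumes wf: "well_filtered X" and x_top: "range x \<subseteq> topspace X"
    and conv: "\<And>n G. openin X G \<Longrightarrow> x n \<in> G \<Longrightarrow> eventually (\<lambda>m. x m \<in> G) sequentially"
    and M: "openin X M" "(\<Inter>n. saturation X (x ` {n..})) \<subseteq> M"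
  shows "\<exists>n. x n \<in> M"
proof -
  define T where "T n = saturation X (x ` {n..})" for n
  have x_T: "x n \<in> T n" for n
    using x_top subset_saturation[of "x ` {n..}" X] unfolding T_def by blast
  have "T n \<in> KX X" for n
  proof -
    have "saturation X ({x n} \<union> x ` {n..}) \<in> KX X"
      using x_top conv by (intro saturation_Un_tail_in_KX) auto
    then show ?thesis
      unfolding T_def by (simp add: insert_absorb)
  qed
  moreover have "decseq T"
    unfolding T_def decseq_def by (auto intro!: saturation_mono)
  ultimately have "K_directed X (range T)"
    by (rule K_directed_decseq)
  then obtain n where "T n \<subseteq> M"
    using well_filteredD[OF wf M(1)] M(2) unfolding T_def by blast
  with x_T[of n] show ?thesis
    by blast
qed

text \<open>If no U n lay in V, a maximal open M above V avoiding the chain would yield a sequence in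
  the U n outside M converging to each of its terms; its saturated tails then form a filtered
  family of compact saturated sets with intersection in V, contradicting well-filteredness.\<close>
lemma way_below_chain_subset_open:
  assumes wf: "well_filtered X" and fc: "first_countable X"
    and Uw: "\<And>n. open_way_below X (U (Suc n)) (U n)"
    and V: "openin X V" "\<Inter>(range U) \<subseteq> V"
  shows "\<exists>n. U n \<subseteq> V"
proof (rule ccontr)
  assume "\<not> (\<exists>n. U n \<subseteq> V)"
  then have "\<And>n. \<not> U n \<subseteq> V"
    by blast
  then obtain M where M: "openin X M" "V \<subseteq> M" "\<And>n. \<not> U n \<subseteq> M"
    and max: "\<And>G. openin X G \<Longrightarrow> (\<And>n. \<not> U n \<subseteq> M \<union> G) \<Longrightarrow> G \<subseteq> M"
  proof (rule exists_maximal_open_avoiding_chain[of X U V, OF Uw V(1)])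
    fix M assume "openin X M" "V \<subseteq> M" "\<And>n. \<not> U n \<subseteq> M"
      "\<And>G. openin X G \<Longrightarrow> (\<And>n. \<not> U n \<subseteq> M \<union> G) \<Longrightarrow> G \<subseteq> M"
    then show thesis
      by (rule that)
  qed
  have U_open: "openin X (U n)" for n
    using Uw[of n] by (simp add: open_way_below_def)
  have "decseq U"
    using Uw open_way_below_subset by (intro decseq_SucI) blast
  have meet: "\<not> U n \<inter> \<Inter>\<F> \<subseteq> M"
    if "finite \<F>" "\<And>G. G \<in> \<F> \<Longrightarrow> openin X G \<and> \<not> G \<subseteq> M" for n \<F>
    using maximal_open_avoiding_chain_Inter[of U X M \<F> n, OF \<open>decseq U\<close> U_open M(3) max that]
    by blast
  obtain x where x: "\<And>n. x n \<in> U n - M"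
    and conv: "\<And>n G. openin X G \<Longrightarrow> x n \<in> G \<Longrightarrow> eventually (\<lambda>m. x m \<in> G) sequentially"
    using sequence_converging_to_each_term[of X U M, OF fc openin_subset[OF U_open] meet] by metis
  have "saturation X (x ` {n..}) \<subseteq> U n" for n
  proof -
    have "x ` {n..} \<subseteq> U n"
      using x decseqD[OF \<open>decseq U\<close>] by blast
    then show ?thesis
      by (intro saturation_least openin_imp_saturated U_open)
  qed
  then have "(\<Inter>n. saturation X (x ` {n..})) \<subseteq> \<Inter>(range U)"
    by auto
  also have "\<dots> \<subseteq> M"
    using V(2) M(2) by (rule subset_trans)
  finally have tails: "(\<Inter>n. saturation X (x ` {n..})) \<subseteq> M" .
  have "range x \<subseteq> topspace X"
    using x openin_subset[OF U_open] by blast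
  then have "\<exists>n. x n \<in> M"
    by (rule well_filtered_tail_saturations_subset_open[of X x M, OF wf _ _ M(1) tails]) (fact conv)
  with x show False
    by blast
qed

lemma compactin_Inter_way_below_chain:
  assumes wf: "well_filtered X" and fc: "first_countable X"
    and Uw: "\<And>n. open_way_below X (U (Suc n)) (U n)"
  shows "compactin X (\<Inter>(range U))"
  unfolding compactin_def
proof (intro conjI allI impI)
  show "\<Inter>(range U) \<subseteq> topspace X"
    using Uw[of 0] openin_subset by (fastforce simp: open_way_below_def)
  fix \<C> assume \<C>: "(\<forall>C\<in>\<C>. openin X C) \<and> \<Inter>(range U) \<subseteq> \<Union>\<C>"
  then have "openin X (\<Union>\<C>)"
    by blast
  then obtain n where "U n \<subseteq> \<Union>\<C>"
    using way_below_chain_subset_open[of X U, OF wf fc Uw] \<C> by blast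
  then obtain \<F> where "finite \<F>" "\<F> \<subseteq> \<C>" "U (Suc n) \<subseteq> \<Union>\<F>"
    using open_way_below_finite_subcover[OF Uw[of n], of \<C>] \<C> by blast
  then show "\<exists>\<F>. finite \<F> \<and> \<F> \<subseteq> \<C> \<and> \<Inter>(range U) \<subseteq> \<Union>\<F>"
    by blast
qed

text \<open>Interpolating A \<lless> V repeatedly gives a way-below chain V = U 0 \<ggreater> U 1 \<ggreater> \<dots> \<ggreater> A,
  whose intersection is a compact neighbourhood of every point of A.\<close>
lemma locally_compact_if_core_compact:
  assumes wf: "well_filtered X" and fc: "first_countable X" and cc: "core_compact X"
  shows "locally_compact_nb X"
  unfolding locally_compact_nb_def
proof (intro ballI allI impI)
  fix x V assume "x \<in> topspace X" and V: "openin X V \<and> x \<in> V"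
  then obtain A where A: "open_way_below X A V" "x \<in> A"
    using core_compactD[OF cc] by blast
  have "\<exists>U. \<forall>n. (open_way_below X A (U n) \<and> U n \<subseteq> V) \<and> open_way_below X (U (Suc n)) (U n)"
  proof (rule dependent_nat_choice)
    show "\<exists>B. open_way_below X A B \<and> B \<subseteq> V"
      using A(1) by blast
    fix B n assume "open_way_below X A B \<and> B \<subseteq> V"
    then obtain B' where "open_way_below X A B'" "open_way_below X B' B"
      using open_way_below_interpolate[OF cc] by blast
    then show "\<exists>B'. (open_way_below X A B' \<and> B' \<subseteq> V) \<and> open_way_below X B' B"
      using \<open>open_way_below X A B \<and> B \<subseteq> V\<close> open_way_below_subset by blast
  qed
  then obtain U where U: "\<And>n. open_way_below X A (U n)" "\<And>n. U n \<subseteq> V"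
    "\<And>n. open_way_below X (U (Suc n)) (U n)"
    by blast
  have "openin X A"
    using A(1) by (simp add: open_way_below_def)
  moreover have "A \<subseteq> \<Inter>(range U)"
    using open_way_below_subset[OF U(1)] by blast
  ultimately have "A \<subseteq> X interior_of \<Inter>(range U)"
    by (rule interior_of_maximal[rotated])
  then show "\<exists>K. compactin X K \<and> x \<in> X interior_of K \<and> K \<subseteq> V"
    using compactin_Inter_way_below_chain[of X U, OF wf fc U(3)] A(2) U(2) by blast
qed

theorem mainTheorem10:
  fixes X :: "'a topology"
  assumes "t0_space X"
    and "well_filtered X"
    and "first_countable (smyth_power X)"
  shows "(locally_compact_nb X \<longleftrightarrow>
            K_continuous_semilattice X \<and> continuous_map X (Sigma_K X) (upclosure X))
       \<and> (locally_compact_nb X \<longleftrightarrow> K_continuous_semilattice X \<and> property_Q X)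
       \<and> (locally_compact_nb X \<longleftrightarrow> K_continuous_semilattice X)
       \<and> (locally_compact_nb X \<longleftrightarrow> core_compact X)"
proof -
  have fc: "first_countable X"
    using assms(3) by (rule smyth_first_countable_imp_first_countable)
  have lc_kc: "locally_compact_nb X \<longleftrightarrow> K_continuous_semilattice X"
    using K_continuous_semilattice_if_locally_compact[OF assms(2,3)]
      locally_compact_if_K_continuous_semilattice[OF assms(2,3)] by blast
  have lc_cc: "locally_compact_nb X \<longleftrightarrow> core_compact X"
    using core_compact_if_locally_compact locally_compact_if_core_compact[OF assms(2) fc] by blast
  have "property_Q X"
    using assms(2,3) by (rule property_Q_if_well_filtered)
  moreover have "K_continuous_semilattice X \<Longrightarrow> continuous_map X (Sigma_K X) (upclosure X)"
    using assms(3) by (rule continuous_map_upclosure_Sigma_K)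
  ultimately show ?thesis
    using lc_kc lc_cc by blast
qed

end
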